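(* Let $A=\{a_1<a_2<a_3<\cdots\}\subseteq\mathbb{N}$ be an infinite set with $\lambda(A)>1$. Then $\underline{\underline{d}}(A)=\underline{d}_\infty(A)=0$.
   Context: $\mathbb{N}=\{1,2,3,\dots\}$. For an infinite set $A=\{a_1<a_2<\cdots\}$, the gap density is $\lambda(A)=\limsup_{n\to\infty}\frac{a_{n+1}}{a_n}$. For $A\subseteq\mathbb{N}$ let $A(n)=|A\cap[1,n]|$; $\mathcal{D}$ is the collection of sets for which $d(A)=\lim_{n\to\infty}A(n)/n$ exists; $\underline{\underline{d}}(A)=\sup\{d(B);\ B\subseteq A,\ B\in\mathcal{D}\}$. For $\alpha\ge-1$ put $A_\alpha(n)=\sum_{k=1}^n\chi_A(k)k^\alpha$, $\mathbb{N}_\alpha(n)=\sum_{k=1}^nk^\alpha$, $\underline{d}_\alpha(A)=\liminf_{n\to\infty}\frac{A_\alpha(n)}{\mathbb{N}_\alpha(n)}$ and $\underline{d}_\infty(A)=\inf_{\alpha\ge-1}\underline{d}_\alpha(A)$. *)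

theory Defs
  imports "HOL-Analysis.Analysis" "HOL-Library.Liminf_Limsup"
begin

text \<open>Sets are subsets of nat; the paper's N = {1,2,...}, so we require 0 \<notin> A
  where relevant. The n-th element a_{n+1} of an infinite set A is enumerate A n
  (0-indexed).\<close>

definition gap_density :: "nat set \<Rightarrow> ereal" where
  "gap_density A = limsup (\<lambda>n. ereal (real (enumerate A (Suc n)) / real (enumerate A n)))"

definition counting :: "nat set \<Rightarrow> nat \<Rightarrow> nat" where
  "counting A n = card (A \<inter> {1..n})"

definition has_density :: "nat set \<Rightarrow> bool" where
  "has_density A \<longleftrightarrow> convergent (\<lambda>n. real (counting A n) / real n)"

definition density :: "nat set \<Rightarrow> real" where
  "density A = lim (\<lambda>n. real (counting A n) / real n)"

definition lower_lower_density :: "nat set \<Rightarrow> ereal" where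
  "lower_lower_density A = (SUP B\<in>{B. B \<subseteq> A \<and> has_density B}. ereal (density B))"

definition weighted_count :: "real \<Rightarrow> nat set \<Rightarrow> nat \<Rightarrow> real" where
  "weighted_count \<alpha> A n = (\<Sum>k\<in>A \<inter> {1..n}. real k powr \<alpha>)"

definition weighted_total :: "real \<Rightarrow> nat \<Rightarrow> real" where
  "weighted_total \<alpha> n = (\<Sum>k=1..n. real k powr \<alpha>)"

definition lower_alpha_density :: "real \<Rightarrow> nat set \<Rightarrow> ereal" where
  "lower_alpha_density \<alpha> A =
     liminf (\<lambda>n. ereal (weighted_count \<alpha> A n / weighted_total \<alpha> n))"

definition lower_infty_density :: "nat set \<Rightarrow> ereal" where
  "lower_infty_density A = (INF \<alpha>\<in>{-1..}. lower_alpha_density \<alpha> A)"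

end

theory Submission
  imports Defs
begin

text \<open>If \<open>\<lambda>(A) > 1\<close>, then beyond every bound there are \<open>M\<close> and \<open>N \<ge> c M\<close> for a fixed \<open>c > 1\<close>
  such that \<open>A\<close> has no element in \<open>(M, N]\<close>. Along these gaps the counting function of any
  \<open>B \<subseteq> A\<close> stays constant while \<open>n\<close> grows by the factor \<open>c\<close>, so \<open>B(n)/n\<close> cannot converge to
  a positive limit. Likewise \<open>A\<^sub>\<alpha>(N)\<close> is at most \<open>\<nat>\<^sub>\<alpha>(M)\<close>, whereas \<open>\<nat>\<^sub>\<alpha>(N) \<ge> (N/M)\<^sup>\<alpha> \<nat>\<^sub>\<alpha>(M)\<close>,
  so \<open>d\<^sub>\<alpha>(A) \<le> c\<^sup>-\<^sup>\<alpha>\<close>, which tends to \<open>0\<close> as \<open>\<alpha> \<rightarrow> \<infinity>\<close>.\<close>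

definition has_ratio_gaps :: "real \<Rightarrow> nat set \<Rightarrow> bool" where
  "has_ratio_gaps c A \<longleftrightarrow>
     (\<forall>K. \<exists>M N. K \<le> M \<and> 1 \<le> M \<and> M \<le> N \<and> c * real M \<le> real N \<and>
        A \<inter> {1..N} = A \<inter> {1..M})"

lemma frequently_less_Limsup:
  fixes f :: "'a \<Rightarrow> 'b::complete_linorder"
  assumes "c < Limsup F f"
  shows "\<exists>\<^sub>F x in F. c < f x"
proof (rule ccontr)
  assume "\<not> (\<exists>\<^sub>F x in F. c < f x)"
  then have "\<forall>\<^sub>F x in F. f x \<le> c"
    by (simp add: not_frequently not_less)
  then have "Limsup F f \<le> c"
    by (rule Limsup_bounded)
  with assms show False
    by simp
qed

lemma Int_atLeastAtMost_enumerate_Suc: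
  fixes S :: "nat set"
  assumes "infinite S"
  shows "S \<inter> {1..enumerate S (Suc n) - 1} = S \<inter> {1..enumerate S n}"
proof -
  have "x \<le> enumerate S (Suc n) - 1 \<longleftrightarrow> x \<le> enumerate S n" if "x \<in> S" for x
  proof -
    obtain k where k: "x = enumerate S k"
      using enumerate_Ex[OF assms \<open>x \<in> S\<close>] by metis
    have "x \<le> enumerate S (Suc n) - 1 \<longleftrightarrow> x < enumerate S (Suc n)"
      using enumerate_step[OF assms, of n] by linarith
    also have "\<dots> \<longleftrightarrow> k \<le> n"
      using k assms by (simp add: less_Suc_eq_le)
    also have "\<dots> \<longleftrightarrow> x \<le> enumerate S n"
      using k assms by simp
    finally show ?thesis .
  qed
  then show ?thesis
    by auto
qed

lemma has_ratio_gaps_if_gap_density_gt_1: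
  fixes A :: "nat set"
  assumes "0 \<notin> A" and inf: "infinite A" and "gap_density A > 1"
  obtains c where "c > 1" and "has_ratio_gaps c A"
proof -
  let ?a = "enumerate A"
  obtain r where "1 < ereal r" and "ereal r < gap_density A"
    using ereal_dense2[OF assms(3)] by blast
  then have r: "1 < r" and freq: "\<exists>\<^sub>F n in sequentially. r < real (?a (Suc n)) / real (?a n)"
    using frequently_less_Limsup[of "ereal r" sequentially
        "\<lambda>n. ereal (real (?a (Suc n)) / real (?a n))"]
    unfolding gap_density_def by simp_all
  define c where "c = (1 + r) / 2"
  have "\<exists>M N. K \<le> M \<and> 1 \<le> M \<and> M \<le> N \<and> c * real M \<le> real N \<and> A \<inter> {1..N} = A \<inter> {1..M}"
    for K
  proof -
    \<comment> \<open>Once \<open>a\<^sub>n \<ge> 2/(r - 1)\<close>, the slack \<open>r - c\<close> absorbs the \<open>-1\<close> in \<open>N = a\<^sub>n\<^sub>+\<^sub>1 - 1\<close>.\<close>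
    define K' where "K' = max K (nat \<lceil>2 / (r - 1)\<rceil>)"
    have "\<forall>\<^sub>F n in sequentially. K' \<le> ?a n"
      using eventually_ge_at_top[of K'] by eventually_elim (meson inf le_enumerate order_trans)
    then obtain n where n: "K' \<le> ?a n" and ratio: "r < real (?a (Suc n)) / real (?a n)"
      using frequently_ex[OF frequently_eventually_conj[OF freq]] by auto
    have pos: "1 \<le> ?a n"
      using enumerate_in_set[OF inf, of n] assms(1) by (metis less_one not_less)
    have step: "?a n < ?a (Suc n)"
      using enumerate_step[OF inf] .
    have "r * real (?a n) < real (?a (Suc n))"
      using ratio pos by (simp add: field_simps)
    moreover have "2 / (r - 1) \<le> real (?a n)"
      using n unfolding K'_def by linarith
    then have "1 \<le> (r - c) * real (?a n)"
      using r by (simp add: c_def field_simps)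
    ultimately have "c * real (?a n) \<le> real (?a (Suc n) - 1)"
      using step by (simp add: algebra_simps)
    then show ?thesis
      using n pos step Int_atLeastAtMost_enumerate_Suc[OF inf, of n]
      by (intro exI[of _ "?a n"] exI[of _ "?a (Suc n) - 1"]) (auto simp: K'_def)
  qed
  moreover have "c > 1"
    using r by (simp add: c_def)
  ultimately show ?thesis
    using that unfolding has_ratio_gaps_def by blast
qed

lemma density_eq_0_if_has_ratio_gaps:
  assumes c: "c > 1" and "has_ratio_gaps c A" and "B \<subseteq> A" and "has_density B"
  shows "density B = 0"
proof -
  obtain M N :: "nat \<Rightarrow> nat" where M: "\<And>K. K \<le> M K" "\<And>K. 1 \<le> M K"
    and M_le_N: "\<And>K. M K \<le> N K" and N: "\<And>K. c * real (M K) \<le> real (N K)"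
    and gap: "\<And>K. A \<inter> {1..N K} = A \<inter> {1..M K}"
    using assms(2) unfolding has_ratio_gaps_def by metis
  define f where "f n = real (counting B n) / real n" for n
  define d where "d = density B"
  have f: "f \<longlonglongrightarrow> d"
    using assms(4) unfolding has_density_def density_def f_def d_def
    by (simp add: convergent_LIMSEQ_iff)
  have "filterlim M sequentially sequentially"
    using M(1) by (intro filterlim_at_top_mono[OF filterlim_ident]) auto
  moreover from this have "filterlim N sequentially sequentially"
    by (rule filterlim_at_top_mono) (use M_le_N in auto)
  ultimately have fM: "(\<lambda>K. f (M K)) \<longlonglongrightarrow> d" and fN: "(\<lambda>K. f (N K)) \<longlonglongrightarrow> d"
    using filterlim_compose[OF f] by blast+
  have le: "f (N K) \<le> f (M K) / c" for K
  proof -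
    have "B \<inter> {1..N K} = B \<inter> {1..M K}"
      using gap[of K] assms(3) by blast
    moreover have cM: "0 < c * real (M K)"
      using M(2)[of K] c by simp
    ultimately have "f (N K) = real (counting B (M K)) / real (N K)"
      unfolding f_def counting_def by simp
    also have "\<dots> \<le> real (counting B (M K)) / (c * real (M K))"
      using N[of K] cM by (intro divide_left_mono) auto
    also have "\<dots> = f (M K) / c"
      unfolding f_def by simp
    finally show ?thesis .
  qed
  have "(\<lambda>K. f (M K) / c) \<longlonglongrightarrow> d / c"
    using fM c by (intro tendsto_divide) simp_all
  then have "d \<le> d / c"
    using le by (intro LIMSEQ_le[OF fN]) auto
  moreover have "0 \<le> d"
    by (rule LIMSEQ_le_const[OF f]) (auto simp: f_def)
  ultimately show ?thesis
    using c mult_le_cancel_left1[of d c] unfolding d_def by (simp add: le_divide_eq)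
qed

lemma lower_lower_density_eq_0_if_has_ratio_gaps:
  assumes "c > 1" and "has_ratio_gaps c A"
  shows "lower_lower_density A = 0"
proof -
  have "has_density {}"
    unfolding has_density_def counting_def by (simp add: convergent_const)
  then have "(\<lambda>B. ereal (density B)) ` {B. B \<subseteq> A \<and> has_density B} = {0}"
    using density_eq_0_if_has_ratio_gaps[OF assms] by force
  then show ?thesis
    unfolding lower_lower_density_def by simp
qed

lemma weighted_total_pos: "1 \<le> n \<Longrightarrow> weighted_total \<alpha> n > 0"
  unfolding weighted_total_def by (rule sum_pos2[of _ 1]) auto

lemma weighted_total_scaled_le:
  assumes "1 \<le> M" "M \<le> N" "0 \<le> \<alpha>"
  shows "(real N / real M) powr \<alpha> * weighted_total \<alpha> M \<le> weighted_total \<alpha> N"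
proof -
  \<comment> \<open>The shift \<open>k \<mapsto> k + (N - M)\<close> maps \<open>{1..M}\<close> into \<open>{1..N}\<close>, and \<open>k N / M \<le> k + (N - M)\<close>.\<close>
  define t where "t = N - M"
  have "(real N / real M) powr \<alpha> * weighted_total \<alpha> M
        = (\<Sum>k=1..M. (real N / real M * real k) powr \<alpha>)"
    unfolding weighted_total_def sum_distrib_left
    by (intro sum.cong refl) (simp add: powr_mult[symmetric])
  also have "\<dots> \<le> (\<Sum>k=1..M. real (k + t) powr \<alpha>)"
  proof (intro sum_mono powr_mono2)
    fix k assume k: "k \<in> {1..M}"
    have "real t * real k \<le> real t * real M"
      using k by (intro mult_left_mono) auto
    then have "real N * real k \<le> real (k + t) * real M"
      using assms by (simp add: t_def of_nat_diff algebra_simps)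
    then show "real N / real M * real k \<le> real (k + t)"
      using assms by (simp add: field_simps)
  qed (use assms in auto)
  also have "\<dots> = (\<Sum>j\<in>(\<lambda>k. k + t) ` {1..M}. real j powr \<alpha>)"
    by (subst sum.reindex) (auto simp: inj_on_def)
  also have "\<dots> \<le> weighted_total \<alpha> N"
    unfolding weighted_total_def using assms by (intro sum_mono2) (auto simp: t_def)
  finally show ?thesis .
qed

lemma weighted_ratio_le_if_gap:
  assumes "1 \<le> M" "M \<le> N" "0 \<le> \<alpha>" and gap: "A \<inter> {1..N} = A \<inter> {1..M}"
  shows "weighted_count \<alpha> A N / weighted_total \<alpha> N \<le> (real M / real N) powr \<alpha>"
proof -
  have count: "weighted_count \<alpha> A N \<le> weighted_total \<alpha> M"
    unfolding weighted_count_def weighted_total_def gap by (intro sum_mono2) auto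
  have M: "weighted_total \<alpha> M > 0"
    using weighted_total_pos assms by blast
  have scale: "(real N / real M) powr \<alpha> > 0"
    using assms by simp
  have "weighted_count \<alpha> A N / weighted_total \<alpha> N
          \<le> weighted_total \<alpha> M / ((real N / real M) powr \<alpha> * weighted_total \<alpha> M)"
    using count weighted_total_scaled_le[OF assms(1-3)] scale M by (intro frac_le) auto
  also have "\<dots> = (real M / real N) powr \<alpha>"
    using M assms by (simp add: powr_divide)
  finally show ?thesis .
qed

lemma lower_alpha_density_le_if_has_ratio_gaps:
  assumes c: "c > 1" and gaps: "has_ratio_gaps c A" and "0 \<le> \<alpha>"
  shows "lower_alpha_density \<alpha> A \<le> ereal ((1 / c) powr \<alpha>)"
  unfolding lower_alpha_density_def liminf_SUP_INF
proof (rule SUP_least)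
  fix K :: nat
  obtain M N where MN: "K \<le> M" "1 \<le> M" "M \<le> N" "c * real M \<le> real N"
    and gap: "A \<inter> {1..N} = A \<inter> {1..M}"
    using gaps unfolding has_ratio_gaps_def by blast
  have "weighted_count \<alpha> A N / weighted_total \<alpha> N \<le> (real M / real N) powr \<alpha>"
    using weighted_ratio_le_if_gap[OF MN(2,3) \<open>0 \<le> \<alpha>\<close> gap] .
  also have "\<dots> \<le> (1 / c) powr \<alpha>"
  proof (rule powr_mono2)
    show "real M / real N \<le> 1 / c"
      using MN c by (simp add: divide_simps mult.commute)
  qed (use \<open>0 \<le> \<alpha>\<close> in simp_all)
  finally show "(INF n\<in>{K..}. ereal (weighted_count \<alpha> A n / weighted_total \<alpha> n))
                  \<le> ereal ((1 / c) powr \<alpha>)"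
    using MN by (intro INF_lower2[of N]) auto
qed

lemma lower_infty_density_nonneg: "0 \<le> lower_infty_density A"
  unfolding lower_infty_density_def lower_alpha_density_def
  by (intro INF_greatest Liminf_bounded always_eventually allI)
    (auto simp: weighted_count_def weighted_total_def intro!: divide_nonneg_nonneg sum_nonneg)

lemma lower_infty_density_eq_0_if_has_ratio_gaps:
  assumes c: "c > 1" and "has_ratio_gaps c A"
  shows "lower_infty_density A = 0"
proof -
  have "lower_infty_density A \<le> 0 + ereal e" if "e > 0" for e
  proof -
    have "1 / c < 1"
      using c by simp
    then obtain m where m: "(1 / c) ^ m < e"
      using real_arch_pow_inv[OF \<open>e > 0\<close>] by blast
    have "lower_infty_density A \<le> lower_alpha_density (real m) A"
      unfolding lower_infty_density_def by (rule INF_lower) simp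
    also have "\<dots> \<le> ereal ((1 / c) powr real m)"
      using lower_alpha_density_le_if_has_ratio_gaps[OF assms] by simp
    also have "(1 / c) powr real m = (1 / c) ^ m"
      using c by (simp add: powr_realpow)
    also have "ereal ((1 / c) ^ m) \<le> 0 + ereal e"
      using m by simp
    finally show ?thesis .
  qed
  then have "lower_infty_density A \<le> 0"
    by (rule ereal_le_epsilon2[rule_format])
  then show ?thesis
    using lower_infty_density_nonneg by (rule order.antisym)
qed

theorem proposition4p6:
  fixes A :: "nat set"
  assumes "0 \<notin> A" and "infinite A" and "gap_density A > 1"
  shows "lower_lower_density A = 0 \<and> lower_infty_density A = 0"
proof -
  obtain c where "c > 1" and "has_ratio_gaps c A"
    using has_ratio_gaps_if_gap_density_gt_1[OF assms] .
  then show ?thesis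
    using lower_lower_density_eq_0_if_has_ratio_gaps lower_infty_density_eq_0_if_has_ratio_gaps
    by blast
qed

end
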